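(* Let $\mathcal{C}$ be a connected simply connected Cartan scheme whose real roots form a finite root system, let $a$ be an object, $\Gamma^a$ its Dynkin diagram, and $i\in I$. (1) For $i_1,\dots,i_k\in I$, the induced subdiagram on $\{i,i_1,\dots,i_k\}$ is connected in $\Gamma^a$ if and only if it is connected in $\Gamma^{\rho_i(a)}$. Let $j,k\in I$ with $|\{i,j,k\}|=3$. (2) If $i$ is connected neither to $j$ nor to $k$ (in $\Gamma^a$), then the connection between $j$ and $k$, including labels, is the same in $\Gamma^a$ and $\Gamma^{\rho_i(a)}$, i.e. $c^a_{jk}=c^{\rho_i(a)}_{jk}$ and $c^a_{kj}=c^{\rho_i(a)}_{kj}$. (3) If $i$ is connected to $j$ and not connected to $k$, then $j$ and $k$ are connected in $\Gamma^a$ if and only if they are connected in $\Gamma^{\rho_i(a)}$.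
   Context: Cartan scheme $\mathcal{C}=(I,A,(\rho_i),(C^a))$: $A$ non-empty, involutions $\rho_i:A\to A$, generalized Cartan matrices $C^a=(c^a_{ij})$ ($c_{ii}=2$, $c_{ij}\le 0$ for $i\ne j$, $c_{ij}=0\Leftrightarrow c_{ji}=0$) with $c^a_{ij}=c^{\rho_i(a)}_{ij}$. Weyl groupoid generated by $\sigma_i^a:a\to\rho_i(a)$, $\sigma^a_i(\alpha_j)=\alpha_j-c^a_{ij}\alpha_i$ on $\mathbb{Z}^I$. Connected: all $\mathrm{Hom}(a,b)\neq\emptyset$; simply connected: $\mathrm{Hom}(a,a)=\{\mathrm{id}\}$. Real roots $R^a=\{w(\alpha_j): w\in\mathrm{Hom}(b,a)\}$, $R^a_+=R^a\cap\mathbb{N}_0^I$; finite root system: all $R^a$ finite, $R^a=R^a_+\cup-R^a_+$, $(\rho_i\rho_j)^{m^a_{ij}}(a)=a$ whenever $i\ne j$ and $m^a_{ij}=|R^a\cap(\mathbb{N}_0\alpha_i+\mathbb{N}_0\alpha_j)|<\infty$. The Dynkin diagram $\Gamma^a$ has vertex set $I$; distinct $i,j$ are connected iff $c^a_{ij}\ne0$, by an arrow to $i$ labelled $-c^a_{ij}$. *)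

theory Defs
  imports Main
begin

text \<open>Cartan schemes with index set I = UNIV of a finite type 'i.\<close>

definition simple_root :: "'i \<Rightarrow> 'i \<Rightarrow> int" where
  "simple_root i = (\<lambda>k. if k = i then 1 else 0)"

definition cartan_scheme ::
  "'a set \<Rightarrow> ('i::finite \<Rightarrow> 'a \<Rightarrow> 'a) \<Rightarrow> ('a \<Rightarrow> 'i \<Rightarrow> 'i \<Rightarrow> int) \<Rightarrow> bool" where
  "cartan_scheme A rho C \<longleftrightarrow>
     A \<noteq> {} \<and>
     (\<forall>i. \<forall>a\<in>A. rho i a \<in> A \<and> rho i (rho i a) = a) \<and>
     (\<forall>a\<in>A. (\<forall>i. C a i i = 2) \<and>
             (\<forall>i j. i \<noteq> j \<longrightarrow> C a i j \<le> 0) \<and>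
             (\<forall>i j. C a i j = 0 \<longleftrightarrow> C a j i = 0)) \<and>
     (\<forall>a\<in>A. \<forall>i j. C a i j = C (rho i a) i j)"

text \<open>The generator sigma_i^a : a \<rightarrow> rho_i(a), the linear map with
  sigma_i^a(alpha_j) = alpha_j - c^a_ij alpha_i.\<close>
definition sigma :: "('a \<Rightarrow> 'i::finite \<Rightarrow> 'i \<Rightarrow> int) \<Rightarrow> 'a \<Rightarrow> 'i \<Rightarrow> ('i \<Rightarrow> int) \<Rightarrow> ('i \<Rightarrow> int)" where
  "sigma C a i v = (\<lambda>k. v k - (if k = i then (\<Sum>j\<in>UNIV. C a i j * v j) else 0))"

text \<open>weyl_mor A rho C a b f: f is (the linear map of) a morphism in Hom(a,b)
  of the Weyl groupoid, i.e. a composition of generators sigma.\<close>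
inductive weyl_mor ::
  "'a set \<Rightarrow> ('i::finite \<Rightarrow> 'a \<Rightarrow> 'a) \<Rightarrow> ('a \<Rightarrow> 'i \<Rightarrow> 'i \<Rightarrow> int) \<Rightarrow> 'a \<Rightarrow> 'a \<Rightarrow> (('i \<Rightarrow> int) \<Rightarrow> ('i \<Rightarrow> int)) \<Rightarrow> bool"
  for A rho C where
  mor_id: "a \<in> A \<Longrightarrow> weyl_mor A rho C a a id"
| mor_step: "weyl_mor A rho C a b f \<Longrightarrow> weyl_mor A rho C a (rho i b) (sigma C b i \<circ> f)"

definition ws_connected where
  "ws_connected A rho C \<longleftrightarrow> (\<forall>a\<in>A. \<forall>b\<in>A. \<exists>f. weyl_mor A rho C a b f)"

definition ws_simply_connected where
  "ws_simply_connected A rho C \<longleftrightarrow> (\<forall>a\<in>A. \<forall>f. weyl_mor A rho C a a f \<longrightarrow> f = id)"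

definition real_roots where
  "real_roots A rho C a = {f (simple_root j) | b f j. weyl_mor A rho C b a f}"

definition pos_real_roots where
  "pos_real_roots A rho C a = {v \<in> real_roots A rho C a. \<forall>k. v k \<ge> 0}"

definition m_ij where
  "m_ij A rho C a i j = card {v \<in> real_roots A rho C a.
      v i \<ge> 0 \<and> v j \<ge> 0 \<and> (\<forall>k. k \<noteq> i \<and> k \<noteq> j \<longrightarrow> v k = 0)}"

definition finite_root_system where
  "finite_root_system A rho C \<longleftrightarrow>
     (\<forall>a\<in>A. finite (real_roots A rho C a)) \<and>
     (\<forall>a\<in>A. real_roots A rho C a =
              pos_real_roots A rho C a \<union> uminus ` pos_real_roots A rho C a) \<and>
     (\<forall>a\<in>A. \<forall>i j. i \<noteq> j \<longrightarrow>
        finite {v \<in> real_roots A rho C a.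
          v i \<ge> 0 \<and> v j \<ge> 0 \<and> (\<forall>k. k \<noteq> i \<and> k \<noteq> j \<longrightarrow> v k = 0)} \<longrightarrow>
        ((rho i \<circ> rho j) ^^ m_ij A rho C a i j) a = a)"

definition dynkin_edge :: "('a \<Rightarrow> 'i \<Rightarrow> 'i \<Rightarrow> int) \<Rightarrow> 'a \<Rightarrow> 'i \<Rightarrow> 'i \<Rightarrow> bool" where
  "dynkin_edge C a i j \<longleftrightarrow> i \<noteq> j \<and> C a i j \<noteq> 0"

definition subdiagram_connected :: "('a \<Rightarrow> 'i \<Rightarrow> 'i \<Rightarrow> int) \<Rightarrow> 'a \<Rightarrow> 'i set \<Rightarrow> bool" where
  "subdiagram_connected C a S \<longleftrightarrow>
     (\<forall>x\<in>S. \<forall>y\<in>S. (x, y) \<in> {(u, v). u \<in> S \<and> v \<in> S \<and> dynkin_edge C a u v}\<^sup>*)"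

end

theory Submission
  imports Defs
begin

text \<open>Two facts about real roots drive everything: a real root has no coefficients of opposite
  signs, and \<open>-c^a_jk\<close> is the largest \<open>m\<close> with \<open>\<alpha>_k + m \<alpha>_j \<in> R^a\<close> (it is attained by
  \<open>\<sigma>_j(\<alpha>_k)\<close>, and a larger \<open>m\<close> would make \<open>\<sigma>_j(\<alpha>_k + m \<alpha>_j)\<close> mixed). When \<open>\<sigma>_i\<close> fixes \<open>\<alpha>_j\<close>
  and \<open>\<alpha>_k\<close> it maps these root strings at \<open>a\<close> and at \<open>\<rho>_i(a)\<close> onto each other, which gives (2).
  If \<open>c^a_ik = c^a_kj = 0\<close> but \<open>c^b_kj = -n < 0\<close> for \<open>b = \<rho>_i(a)\<close>, then \<open>\<sigma>_i(\<alpha>_j + n \<alpha>_k) \<in> R^a\<close>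
  has coefficients \<open>1\<close> at \<open>j\<close> and \<open>n\<close> at \<open>k\<close>, and \<open>\<sigma>_k\<close> turns the latter into \<open>-n\<close>. Hence an edge
  \<open>j\<close>--\<open>k\<close> survives the reflection when \<open>i\<close> is not adjacent to \<open>k\<close>, which gives (3), and an edge
  between two neighbours of \<open>i\<close> is replaced by the path through \<open>i\<close>, which gives (1).\<close>

lemma real_roots_simple_root:
  assumes "b \<in> A"
  shows "simple_root j \<in> real_roots A rho C b"
proof -
  have "weyl_mor A rho C b b id"
    using assms by (rule weyl_mor.mor_id)
  then show ?thesis
    unfolding real_roots_def by (metis (mono_tags, lifting) id_apply mem_Collect_eq)
qed

lemma real_roots_sigma:
  assumes "v \<in> real_roots A rho C b"
  shows "sigma C b i v \<in> real_roots A rho C (rho i b)"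
proof -
  obtain b' f j where v: "v = f (simple_root j)" and f: "weyl_mor A rho C b' b f"
    using assms unfolding real_roots_def by blast
  have "weyl_mor A rho C b' (rho i b) (sigma C b i \<circ> f)"
    using f by (rule weyl_mor.mor_step)
  moreover have "sigma C b i v = (sigma C b i \<circ> f) (simple_root j)"
    using v by simp
  ultimately show ?thesis
    unfolding real_roots_def by blast
qed

lemma sum_mult_supported:
  fixes f v :: "'i::finite \<Rightarrow> 'b::semiring_0"
  assumes "\<And>l. l \<notin> S \<Longrightarrow> v l = 0"
  shows "(\<Sum>l\<in>UNIV. f l * v l) = (\<Sum>l\<in>S. f l * v l)"
  using assms by (intro sum.mono_neutral_right) auto

definition alpha_plus :: "'i \<Rightarrow> int \<Rightarrow> 'i \<Rightarrow> 'i \<Rightarrow> int" where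
  "alpha_plus k m j = (\<lambda>l. if l = k then 1 else if l = j then m else 0)"

lemma sum_mult_alpha_plus:
  fixes f :: "'i::finite \<Rightarrow> int"
  assumes "j \<noteq> k"
  shows "(\<Sum>l\<in>UNIV. f l * alpha_plus k m j l) = f k + m * f j"
  using assms by (subst sum_mult_supported[where S = "{k, j}"]) (auto simp: alpha_plus_def)

locale weyl_groupoid =
  fixes A :: "'a set" and rho :: "'i::finite \<Rightarrow> 'a \<Rightarrow> 'a" and C :: "'a \<Rightarrow> 'i \<Rightarrow> 'i \<Rightarrow> int"
  assumes cartan: "cartan_scheme A rho C"
begin

lemma rho_closed: "b \<in> A \<Longrightarrow> rho i b \<in> A"
  using cartan unfolding cartan_scheme_def by blast

lemma rho_rho: "b \<in> A \<Longrightarrow> rho i (rho i b) = b"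
  using cartan unfolding cartan_scheme_def by blast

lemma C_rho: "b \<in> A \<Longrightarrow> C (rho i b) i j = C b i j"
  using cartan unfolding cartan_scheme_def by metis

lemma C_diag: "b \<in> A \<Longrightarrow> C b i i = 2"
  using cartan unfolding cartan_scheme_def by blast

lemma C_nonpos: "b \<in> A \<Longrightarrow> i \<noteq> j \<Longrightarrow> C b i j \<le> 0"
  using cartan unfolding cartan_scheme_def by blast

lemma C_eq_0_commute: "b \<in> A \<Longrightarrow> C b i j = 0 \<longleftrightarrow> C b j i = 0"
  using cartan unfolding cartan_scheme_def by blast

lemma dynkin_edge_commute: "b \<in> A \<Longrightarrow> dynkin_edge C b i j \<longleftrightarrow> dynkin_edge C b j i"
  unfolding dynkin_edge_def using C_eq_0_commute by blast

lemma dynkin_edge_rho_self: "b \<in> A \<Longrightarrow> dynkin_edge C (rho i b) i j \<longleftrightarrow> dynkin_edge C b i j"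
  unfolding dynkin_edge_def by (simp add: C_rho)

lemma sigma_fixed:
  assumes "(\<Sum>l\<in>UNIV. C b i l * v l) = 0"
  shows "sigma C b i v = v"
  unfolding sigma_def assms by simp

lemma alpha_plus_cartan_real_root:
  assumes b: "b \<in> A" and "j \<noteq> k"
  shows "alpha_plus k (- C b j k) j \<in> real_roots A rho C b"
proof -
  have "sigma C (rho j b) j (simple_root k) \<in> real_roots A rho C (rho j (rho j b))"
    by (rule real_roots_sigma[OF real_roots_simple_root[OF rho_closed[OF b]]])
  moreover have "(\<Sum>l\<in>UNIV. C (rho j b) j l * simple_root k l) = C b j k"
    using C_rho[OF b] by (simp add: simple_root_def if_distrib cong: if_cong)
  then have "sigma C (rho j b) j (simple_root k) = alpha_plus k (- C b j k) j"
    using \<open>j \<noteq> k\<close> unfolding sigma_def by (auto simp: alpha_plus_def simple_root_def)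
  ultimately show ?thesis
    using rho_rho[OF b] by simp
qed

end

locale finite_weyl_groupoid = weyl_groupoid +
  assumes finite_roots: "finite_root_system A rho C"
begin

lemma real_root_not_mixed:
  assumes "b \<in> A" "v \<in> real_roots A rho C b" "v p > 0" "v q < 0"
  shows False
proof -
  have "v \<in> pos_real_roots A rho C b \<union> uminus ` pos_real_roots A rho C b"
    using assms(1,2) finite_roots unfolding finite_root_system_def by blast
  with assms(3,4) show False
    unfolding pos_real_roots_def by (fastforce dest: spec[of _ p] spec[of _ q])
qed

lemma alpha_plus_real_root_le:
  assumes b: "b \<in> A" and jk: "j \<noteq> k" and v: "alpha_plus k m j \<in> real_roots A rho C b"
  shows "m \<le> - C b j k"
proof (rule ccontr)
  assume "\<not> m \<le> - C b j k"
  moreover have "(\<Sum>l\<in>UNIV. C b j l * alpha_plus k m j l) = C b j k + 2 * m"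
    using sum_mult_alpha_plus[OF jk] C_diag[OF b] by simp
  ultimately have "sigma C b j (alpha_plus k m j) k > 0" "sigma C b j (alpha_plus k m j) j < 0"
    using jk unfolding sigma_def by (simp_all add: alpha_plus_def)
  then show False
    using real_root_not_mixed rho_closed[OF b] real_roots_sigma[OF v] by blast
qed

lemma C_le_rho_of_orthogonal:
  assumes b: "b \<in> A" and d: "distinct [i, j, k]" and "C b i j = 0" "C b i k = 0"
  shows "- C b j k \<le> - C (rho i b) j k"
proof -
  let ?v = "alpha_plus k (- C b j k) j"
  have jk: "j \<noteq> k" using d by simp
  have "sigma C b i ?v = ?v"
    by (rule sigma_fixed) (simp add: sum_mult_alpha_plus[OF jk] assms(3,4))
  then have "?v \<in> real_roots A rho C (rho i b)"
    using real_roots_sigma alpha_plus_cartan_real_root[OF b jk] by metis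
  then show ?thesis
    using alpha_plus_real_root_le[OF rho_closed[OF b] jk] by blast
qed

lemma C_rho_of_orthogonal:
  assumes b: "b \<in> A" and d: "distinct [i, j, k]" and z: "C b i j = 0" "C b i k = 0"
  shows "C (rho i b) j k = C b j k"
proof -
  have "C (rho i b) i j = 0" "C (rho i b) i k = 0"
    using z C_rho[OF b] by simp_all
  then have "- C b j k \<ge> - C (rho i b) j k"
    using C_le_rho_of_orthogonal[OF rho_closed[OF b] d] rho_rho[OF b] by metis
  then show ?thesis
    using C_le_rho_of_orthogonal[OF b d z] by simp
qed

lemma C_rho_eq_0:
  assumes b: "b \<in> A" and d: "distinct [i, j, k]" and "C b i k = 0" "C b k j = 0"
  shows "C (rho i b) k j = 0"
proof (rule ccontr)
  define b' where "b' = rho i b"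
  have b': "b' \<in> A" "rho i b' = b" "C b' i k = 0"
    using rho_closed[OF b] rho_rho[OF b] C_rho[OF b] assms(3) by (auto simp: b'_def)
  define n where "n = - C b' k j"
  assume "C (rho i b) k j \<noteq> 0"
  then have "n > 0"
    using C_nonpos[OF b'(1), of k j] d by (auto simp: n_def b'_def)
  have kj: "k \<noteq> j" using d by auto
  define s where "s = C b' i j"
  have "(\<Sum>l\<in>UNIV. C b' i l * alpha_plus j n k l) = s"
    using sum_mult_alpha_plus[OF kj] b'(3) by (simp add: s_def)
  then have "sigma C b' i (alpha_plus j n k) =
      (\<lambda>l. if l = i then - s else if l = j then 1 else if l = k then n else 0)" (is "_ = ?v")
    using d unfolding sigma_def by (auto simp: alpha_plus_def)
  then have v: "?v \<in> real_roots A rho C b"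
    using real_roots_sigma[of _ A rho C b' i] alpha_plus_cartan_real_root[OF b'(1) kj] b'(2)
    unfolding n_def by metis
  have "(\<Sum>l\<in>UNIV. C b k l * ?v l) = C b k i * - s + C b k j + C b k k * n"
    using d by (subst sum_mult_supported[where S = "{i, j, k}"]) auto
  also have "\<dots> = 2 * n"
    using assms(3,4) C_eq_0_commute[OF b, of k i] C_diag[OF b] by simp
  finally have "sigma C b k ?v j > 0" "sigma C b k ?v k < 0"
    using d \<open>n > 0\<close> unfolding sigma_def by auto
  then show False
    using real_root_not_mixed rho_closed[OF b] real_roots_sigma[OF v] by blast
qed

lemma dynkin_edge_rho_iff:
  assumes b: "b \<in> A" and d: "distinct [i, j, k]" and "C b i k = 0"
  shows "dynkin_edge C (rho i b) j k \<longleftrightarrow> dynkin_edge C b j k"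
proof -
  have "C (rho i b) i k = 0"
    using C_rho[OF b] assms(3) by simp
  then have "C (rho i b) k j = 0 \<longleftrightarrow> C b k j = 0"
    using C_rho_eq_0[OF b d] C_rho_eq_0[OF rho_closed[OF b] d] rho_rho[OF b] assms(3) by metis
  then show ?thesis
    unfolding dynkin_edge_def
    using C_eq_0_commute[OF b] C_eq_0_commute[OF rho_closed[OF b]] by metis
qed

definition subdiagram_edges where
  "subdiagram_edges b S = {(u, v). u \<in> S \<and> v \<in> S \<and> dynkin_edge C b u v}"

lemma subdiagram_edges_in_rtrancl_rho:
  assumes b: "b \<in> A" and "i \<in> S" and e: "(u, v) \<in> subdiagram_edges b S"
  shows "(u, v) \<in> (subdiagram_edges (rho i b) S)\<^sup>*"
proof -
  have S: "u \<in> S" "v \<in> S" and uv: "dynkin_edge C b u v"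
    using e by (auto simp: subdiagram_edges_def)
  have edge: "(x, y) \<in> (subdiagram_edges (rho i b) S)\<^sup>*"
    if "x \<in> S" "y \<in> S" "dynkin_edge C (rho i b) x y" for x y
    using that by (auto simp: subdiagram_edges_def)
  consider "u = i \<or> v = i" | "dynkin_edge C b i u" "dynkin_edge C b i v"
    | "u \<noteq> i" "v \<noteq> i" "C b i v = 0" | "u \<noteq> i" "v \<noteq> i" "C b i u = 0"
    unfolding dynkin_edge_def by blast
  then show ?thesis
  proof cases
    case 1
    then show ?thesis
      using uv S dynkin_edge_rho_self[OF b] dynkin_edge_commute[OF b]
        dynkin_edge_commute[OF rho_closed[OF b]] edge by metis
  next
    case 2
    then have "(u, i) \<in> (subdiagram_edges (rho i b) S)\<^sup>*" "(i, v) \<in> (subdiagram_edges (rho i b) S)\<^sup>*"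
      using S \<open>i \<in> S\<close> dynkin_edge_rho_self[OF b] dynkin_edge_commute[OF rho_closed[OF b]] edge
      by metis+
    then show ?thesis by simp
  next
    case 3
    then have "distinct [i, u, v]" using uv by (auto simp: dynkin_edge_def)
    then show ?thesis
      using dynkin_edge_rho_iff[OF b _ 3(3)] uv S edge by blast
  next
    case 4
    then have "distinct [i, v, u]" using uv by (auto simp: dynkin_edge_def)
    then show ?thesis
      using dynkin_edge_rho_iff[OF b _ 4(3)] uv S edge dynkin_edge_commute[OF b]
        dynkin_edge_commute[OF rho_closed[OF b]] by metis
  qed
qed

lemma subdiagram_connected_rho:
  assumes b: "b \<in> A" and "i \<in> S" and con: "subdiagram_connected C b S"
  shows "subdiagram_connected C (rho i b) S"
proof -
  have "subdiagram_edges b S \<subseteq> (subdiagram_edges (rho i b) S)\<^sup>*"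
    using subdiagram_edges_in_rtrancl_rho[OF b \<open>i \<in> S\<close>] by auto
  then have "(subdiagram_edges b S)\<^sup>* \<subseteq> (subdiagram_edges (rho i b) S)\<^sup>*"
    by (rule rtrancl_subset_rtrancl)
  with con show ?thesis
    unfolding subdiagram_connected_def subdiagram_edges_def by blast
qed

lemma subdiagram_connected_rho_iff:
  assumes "b \<in> A" and "i \<in> S"
  shows "subdiagram_connected C (rho i b) S \<longleftrightarrow> subdiagram_connected C b S"
  using subdiagram_connected_rho[OF assms] subdiagram_connected_rho[OF rho_closed assms(2)]
    rho_rho assms(1) by metis

end

theorem lemma3p7:
  fixes A :: "'a set" and rho :: "'i::finite \<Rightarrow> 'a \<Rightarrow> 'a"
    and C :: "'a \<Rightarrow> 'i \<Rightarrow> 'i \<Rightarrow> int" and a :: 'a and i :: 'i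
  assumes "cartan_scheme A rho C"
    and "ws_connected A rho C"
    and "ws_simply_connected A rho C"
    and "finite_root_system A rho C"
    and "a \<in> A"
  shows "(\<forall>is :: 'i list.
            subdiagram_connected C a (insert i (set is)) \<longleftrightarrow>
            subdiagram_connected C (rho i a) (insert i (set is)))
       \<and> (\<forall>j k. distinct [i, j, k] \<longrightarrow>
            \<not> dynkin_edge C a i j \<and> \<not> dynkin_edge C a i k \<longrightarrow>
            C a j k = C (rho i a) j k \<and> C a k j = C (rho i a) k j)
       \<and> (\<forall>j k. distinct [i, j, k] \<longrightarrow>
            dynkin_edge C a i j \<and> \<not> dynkin_edge C a i k \<longrightarrow>
            (dynkin_edge C a j k \<longleftrightarrow> dynkin_edge C (rho i a) j k))"
proof -
  interpret finite_weyl_groupoid A rho C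
    using assms(1,4) by unfold_locales
  have "C (rho i a) j k = C a j k \<and> C (rho i a) k j = C a k j"
    if "distinct [i, j, k]" "C a i j = 0" "C a i k = 0" for j k
    using C_rho_of_orthogonal[OF assms(5)] that by (metis distinct_length_2_or_more)
  then show ?thesis
    using subdiagram_connected_rho_iff[OF assms(5)] dynkin_edge_rho_iff[OF assms(5)]
    by (auto simp: dynkin_edge_def)
qed

end
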